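(* Let $h \ge 2$ and $k \ge 3$ be integers, let $b$ be an integer, and let $A = [0,k-2] \cup \{b\}$. If $b > h(k-2)$, then \[ |hA| = (h+1)\left(1 + \frac{h(k-2)}{2}\right). \] If $b \in [k-1, h(k-2)]$, then there exist unique integers $i_0 \in [0,h-2]$ and $r \in [0,k-3]$ such that $b = (h-i_0)(k-2) - r$, and \[ |hA| = (i_0+1)b + (h-i_0)(h(k-2)+1) - \frac{(h+i_0+1)(h-i_0)(k-2)}{2}. \]
   Context: For real $u,v$, $[u,v] = \{n \in \mathbf{Z} : u \le n \le v\}$. For a positive integer $h$ and a finite set $A$ of integers, $hA$ denotes the set of all sums $a_1+\cdots+a_h$ with $a_1,\ldots,a_h \in A$ (not necessarily distinct). *)

theory Defs
  imports Complex_Main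
begin

definition sumset :: "nat \<Rightarrow> int set \<Rightarrow> int set" where
  "sumset h A = {(\<Sum>i<h. a i) | a. \<forall>i<h. a i \<in> A}"

end

theory Submission
  imports Defs
begin

text \<open>Write \<open>m = k - 2\<close>. A sum of \<open>h\<close> elements of \<open>A\<close> that uses \<open>b\<close> exactly \<open>j\<close> times
ranges over the whole interval \<open>j b + [0, (h - j) m]\<close>, so \<open>hA\<close> is the union of these \<open>h + 1\<close>
layers. Layer \<open>j\<close> reaches layer \<open>j + 1\<close> iff \<open>b \<le> (h - j) m + 1\<close>, a condition that fails
from some index \<open>c\<close> on: the first \<open>c + 1\<close> layers merge into \<open>[0, c b + (h - c) m]\<close> and the
remaining ones are pairwise disjoint, whence \<open>|hA| = c b + (h - c + 1)(1 + (h - c) m / 2)\<close>.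
Here \<open>c = 0\<close> if \<open>b > h m\<close>, and \<open>c = i\<^sub>0 + 1\<close> if \<open>b = (h - i\<^sub>0) m - r\<close> with \<open>0 \<le> r < m\<close>;
the pair \<open>(i\<^sub>0, r)\<close> is read off from the floor division of \<open>-b\<close> by \<open>m\<close>.\<close>

lemma sumset_0 [simp]: "sumset 0 A = {0}"
  by (auto simp: sumset_def)

lemma sumset_Suc: "sumset (Suc h) A = {x + y | x y. x \<in> sumset h A \<and> y \<in> A}"
proof (intro equalityI subsetI)
  fix z assume "z \<in> sumset (Suc h) A"
  then obtain a where a: "\<forall>i<Suc h. a i \<in> A" and z: "z = (\<Sum>i<h. a i) + a h"
    by (auto simp: sumset_def)
  have "(\<Sum>i<h. a i) \<in> sumset h A"
    using a by (auto simp: sumset_def)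
  with a z show "z \<in> {x + y | x y. x \<in> sumset h A \<and> y \<in> A}"
    by blast
next
  fix z assume "z \<in> {x + y | x y. x \<in> sumset h A \<and> y \<in> A}"
  then obtain a y where a: "\<forall>i<h. a i \<in> A" and "y \<in> A" and z: "z = (\<Sum>i<h. a i) + y"
    by (auto simp: sumset_def)
  have "(\<Sum>i<h. (a(h := y)) i) = (\<Sum>i<h. a i)"
    by (rule sum.cong) auto
  then have "z = (\<Sum>i<Suc h. (a(h := y)) i)"
    using z by simp
  moreover have "\<forall>i<Suc h. (a(h := y)) i \<in> A"
    using a \<open>y \<in> A\<close> by (auto simp: less_Suc_eq)
  ultimately show "z \<in> sumset (Suc h) A"
    unfolding sumset_def by blast
qed

lemma sumset_atLeastAtMost:
  assumes "0 \<le> m"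
  shows "sumset n {0..m} = {0..int n * m}"
proof (induction n)
  case 0
  then show ?case by simp
next
  case (Suc n)
  have "{x + y | x y. x \<in> {0..int n * m} \<and> y \<in> {0..m}} = {0..int (Suc n) * m}"
  proof (intro equalityI subsetI)
    fix z assume "z \<in> {0..int (Suc n) * m}"
    then have "z = min z (int n * m) + (z - min z (int n * m))"
      and "min z (int n * m) \<in> {0..int n * m}" and "z - min z (int n * m) \<in> {0..m}"
      using assms by (auto simp: algebra_simps)
    then show "z \<in> {x + y | x y. x \<in> {0..int n * m} \<and> y \<in> {0..m}}"
      by blast
  qed (auto simp: algebra_simps)
  then show ?case
    by (simp add: sumset_Suc Suc.IH)
qed

lemma sumset_insert:
  "sumset h (insert b A) = (\<Union>j\<le>h. (+) (int j * b) ` sumset (h - j) A)"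
proof (induction h)
  case 0
  then show ?case by simp
next
  case (Suc h)
  show ?case
  proof (intro equalityI subsetI)
    fix z assume "z \<in> sumset (Suc h) (insert b A)"
    then obtain j x y where "j \<le> h" "x \<in> sumset (h - j) A" "y \<in> insert b A"
      "z = int j * b + x + y"
      by (auto simp: sumset_Suc Suc.IH)
    then show "z \<in> (\<Union>j\<le>Suc h. (+) (int j * b) ` sumset (Suc h - j) A)"
    proof (cases "y = b")
      case True
      then have "z = int (Suc j) * b + x"
        using \<open>z = int j * b + x + y\<close> by (simp add: algebra_simps)
      then show ?thesis
        using \<open>j \<le> h\<close> \<open>x \<in> sumset (h - j) A\<close> by force
    next
      case False
      then have "x + y \<in> sumset (Suc h - j) A"
        using \<open>j \<le> h\<close> \<open>x \<in> sumset (h - j) A\<close> \<open>y \<in> insert b A\<close>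
        by (auto simp: sumset_Suc Suc_diff_le)
      then show ?thesis
        using \<open>j \<le> h\<close> \<open>z = int j * b + x + y\<close> by (force simp: add.assoc)
    qed
  next
    fix z assume "z \<in> (\<Union>j\<le>Suc h. (+) (int j * b) ` sumset (Suc h - j) A)"
    then obtain j x where j: "j \<le> Suc h" and x: "x \<in> sumset (Suc h - j) A"
      and z: "z = int j * b + x"
      by auto
    show "z \<in> sumset (Suc h) (insert b A)"
    proof (cases j)
      case 0
      then obtain x' y where "x' \<in> sumset h A" "y \<in> A" "z = x' + y"
        using x z by (auto simp: sumset_Suc)
      moreover have "x' \<in> sumset h (insert b A)"
        using \<open>x' \<in> sumset h A\<close> by (force simp: Suc.IH)
      ultimately show ?thesis
        by (auto simp: sumset_Suc)
    next
      case (Suc j')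
      then have "int j' * b + x \<in> sumset h (insert b A)"
        using j x by (force simp: Suc.IH)
      moreover have "z = (int j' * b + x) + b"
        using z Suc by (simp add: algebra_simps)
      ultimately show ?thesis
        by (auto simp: sumset_Suc)
    qed
  qed
qed

definition layer :: "nat \<Rightarrow> int \<Rightarrow> int \<Rightarrow> nat \<Rightarrow> int set" where
  "layer h m b j = {int j * b .. int j * b + int (h - j) * m}"

lemma sumset_insert_atLeastAtMost:
  "0 \<le> m \<Longrightarrow> sumset h (insert b {0..m}) = (\<Union>j\<le>h. layer h m b j)"
  by (simp add: sumset_insert sumset_atLeastAtMost layer_def add.commute)

lemma Union_layers_eq_atLeastAtMost:
  assumes "0 \<le> m" "m \<le> b" "c \<le> h"
    and overlap: "\<And>j. j < c \<Longrightarrow> b \<le> int (h - j) * m + 1"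
  shows "(\<Union>j\<le>c. layer h m b j) = {0 .. int c * b + int (h - c) * m}"
  using assms(3) overlap
proof (induction c)
  case 0
  then show ?case by (simp add: layer_def)
next
  case (Suc c)
  let ?l = "int (Suc c) * b" and ?u = "int c * b + int (h - c) * m"
    and ?u' = "int (Suc c) * b + int (h - Suc c) * m"
  have "int (h - c) * m = int (h - Suc c) * m + m"
    using Suc.prems by (simp add: of_nat_diff algebra_simps)
  moreover have "b \<le> int (h - c) * m + 1"
    using Suc.prems by simp
  ultimately have "?l \<le> ?u + 1" "?u \<le> ?u'"
    using \<open>m \<le> b\<close> by (simp_all add: algebra_simps)
  moreover have "0 \<le> ?l"
    using assms by simp
  ultimately have "{?l..?u'} \<union> {0..?u} = {0..?u'}"
    by auto
  then show ?case
    using Suc by (simp add: layer_def atMost_Suc)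
qed

lemma Union_layers_le:
  assumes "0 \<le> m" "m \<le> b" "n \<le> h" "x \<in> (\<Union>j\<le>n. layer h m b j)"
  shows "x \<le> int n * b + int (h - n) * m"
proof -
  obtain j where "j \<le> n" and x: "x \<le> int j * b + int (h - j) * m"
    using assms(4) by (auto simp: layer_def)
  have "(int n - int j) * m \<le> (int n - int j) * b"
    using \<open>j \<le> n\<close> assms(2) by (intro mult_left_mono) auto
  moreover have "int (h - j) * m = int (h - n) * m + (int n - int j) * m"
    using \<open>j \<le> n\<close> assms(3) by (simp add: of_nat_diff algebra_simps)
  ultimately show ?thesis
    using x by (simp add: algebra_simps)
qed

lemma card_Union_layers:
  assumes "0 \<le> m" "m \<le> b" "c \<le> n" "n \<le> h"
    and overlap: "\<And>j. j < c \<Longrightarrow> b \<le> int (h - j) * m + 1"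
    and gap: "\<And>j. c \<le> j \<Longrightarrow> j < h \<Longrightarrow> int (h - j) * m < b"
  shows "int (card (\<Union>j\<le>n. layer h m b j))
    = int c * b + int (h - c) * m + 1 + (\<Sum>j\<in>{c<..n}. int (h - j) * m + 1)"
  using assms(3,4)
proof (induction n rule: dec_induct)
  case base
  have "0 \<le> int c * b + int (h - c) * m"
    using assms(1,2) by simp
  then show ?case
    using Union_layers_eq_atLeastAtMost[OF assms(1,2) base overlap] by simp
next
  case (step n)
  have "x < int (Suc n) * b" if "x \<in> (\<Union>j\<le>n. layer h m b j)" for x
    using Union_layers_le[OF assms(1,2) _ that] gap[of n] step by (simp add: algebra_simps)
  then have disjoint: "layer h m b (Suc n) \<inter> (\<Union>j\<le>n. layer h m b j) = {}"
    by (force simp: layer_def)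
  have "{c<..Suc n} = insert (Suc n) {c<..n}"
    using step by auto
  then show ?case
    using step assms(1) card_Un_disjoint[OF _ _ disjoint]
    by (simp add: atMost_Suc layer_def)
qed

lemma sum_layer_sizes:
  assumes "c \<le> h"
  shows "2 * (\<Sum>j\<in>{c<..h}. int (h - j) * m + 1) = int (h - c) * (int (h - c) - 1) * m + 2 * int (h - c)"
proof -
  have "(\<Sum>j\<in>{c<..h}. int (h - j) * m + 1) = (\<Sum>t<h - c. int t * m + 1)"
    by (rule sum.reindex_bij_witness[of _ "\<lambda>t. h - t" "\<lambda>j. h - j"]) (use assms in auto)
  moreover have "2 * (\<Sum>t<n. int t * m + 1) = int n * (int n - 1) * m + 2 * int n" for n
    by (induction n) (auto simp: algebra_simps)
  ultimately show ?thesis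
    by simp
qed

lemma card_sumset_insert_atLeastAtMost:
  assumes "0 \<le> m" "m \<le> b" "c \<le> h"
    and overlap: "\<And>j. j < c \<Longrightarrow> b \<le> int (h - j) * m + 1"
    and gap: "\<And>j. c \<le> j \<Longrightarrow> j < h \<Longrightarrow> int (h - j) * m < b"
  shows "2 * int (card (sumset h (insert b {0..m})))
    = 2 * (int c * b + int (h - c) + 1) + int (h - c) * (int (h - c) + 1) * m"
  using card_Union_layers[OF assms(1,2,3) order_refl overlap gap] sum_layer_sizes[OF assms(3), of m]
  by (simp add: sumset_insert_atLeastAtMost[OF assms(1)] algebra_simps)

lemma card_sumset_insert_above:
  assumes "0 \<le> m" "int h * m < b"
  shows "real (card (sumset h (insert b {0..m}))) = (real h + 1) * (1 + real h * m / 2)"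
proof (cases "h = 0")
  case False
  have gap: "int (h - j) * m < b" for j
  proof -
    have "int (h - j) * m \<le> int h * m"
      using assms(1) by (intro mult_right_mono) auto
    then show ?thesis
      using assms(2) by linarith
  qed
  have "m \<le> b"
    using gap[of "h - 1"] False by simp
  have "2 * int (card (sumset h (insert b {0..m}))) = 2 * (int h + 1) + int h * (int h + 1) * m"
    using card_sumset_insert_atLeastAtMost[OF assms(1) \<open>m \<le> b\<close> le0 _ gap] by simp
  then have "real_of_int (2 * int (card (sumset h (insert b {0..m}))))
    = real_of_int (2 * (int h + 1) + int h * (int h + 1) * m)"
    by (rule arg_cong)
  then show ?thesis
    by (simp add: field_simps)
qed simp

lemma card_sumset_insert_between:
  assumes "0 \<le> i" "i \<le> int h - 2" "0 \<le> r" "r < m" "b = (int h - i) * m - r"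
  shows "real (card (sumset h (insert b {0..m}))) =
    real_of_int ((i + 1) * b + (int h - i) * (int h * m + 1))
    - real_of_int ((int h + i + 1) * (int h - i) * m) / 2"
proof -
  define c where "c = nat (i + 1)"
  have c: "int c = i + 1" "c \<le> h"
    using assms by (auto simp: c_def)
  have "2 * m \<le> (int h - i) * m"
    using assms by (intro mult_right_mono) auto
  then have "m \<le> b"
    using assms by linarith
  have "0 \<le> m"
    using assms by simp
  have overlap: "b \<le> int (h - j) * m + 1" if "j < c" for j
  proof -
    have "(int h - i) * m \<le> int (h - j) * m"
      using that c assms by (intro mult_right_mono) auto
    then show ?thesis
      using assms by linarith
  qed
  have gap: "int (h - j) * m < b" if "c \<le> j" "j < h" for j
  proof -
    have "int (h - j) * m \<le> (int h - i - 1) * m"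
      using that c assms by (intro mult_right_mono) auto
    moreover have "(int h - i - 1) * m = (int h - i) * m - m"
      by (simp add: algebra_simps)
    ultimately show ?thesis
      using assms by linarith
  qed
  have "2 * int (card (sumset h (insert b {0..m})))
    = 2 * ((i + 1) * b + (int h - i) * (int h * m + 1)) - (int h + i + 1) * (int h - i) * m"
    using card_sumset_insert_atLeastAtMost[OF \<open>0 \<le> m\<close> \<open>m \<le> b\<close> c(2) overlap gap] c
    by (simp add: of_nat_diff algebra_simps)
  then have "real_of_int (2 * int (card (sumset h (insert b {0..m}))))
    = real_of_int (2 * ((i + 1) * b + (int h - i) * (int h * m + 1)) - (int h + i + 1) * (int h - i) * m)"
    by (rule arg_cong)
  then show ?thesis
    by (simp add: field_simps)
qed

lemma diff_mult_sub_eq_iff_div_mod: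
  fixes b h i m r :: int
  assumes "0 < m"
  shows "(b = (h - i) * m - r \<and> 0 \<le> r \<and> r < m) \<longleftrightarrow> i = h + (- b) div m \<and> r = (- b) mod m"
proof
  assume "b = (h - i) * m - r \<and> 0 \<le> r \<and> r < m"
  then have "- b = r + (i - h) * m" "0 \<le> r" "r < m"
    by (simp_all add: algebra_simps)
  then show "i = h + (- b) div m \<and> r = (- b) mod m"
    using assms by simp
next
  assume "i = h + (- b) div m \<and> r = (- b) mod m"
  then have "(h - i) * m - r = - ((- b) div m * m) - (- b) mod m"
    by (simp add: left_diff_distrib)
  also have "\<dots> = b"
    using div_mult_mod_eq[of "- b" m] by linarith
  finally show "b = (h - i) * m - r \<and> 0 \<le> r \<and> r < m"
    using assms \<open>i = h + (- b) div m \<and> r = (- b) mod m\<close> by simp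
qed

lemma ex1_diff_mult_sub_repr:
  fixes b m :: int
  assumes "0 < m" "m + 1 \<le> b" "b \<le> int h * m"
  shows "\<exists>!p :: int \<times> int. 0 \<le> fst p \<and> fst p \<le> int h - 2 \<and> 0 \<le> snd p \<and> snd p < m
    \<and> b = (int h - fst p) * m - snd p"
proof -
  define i where "i = int h + (- b) div m"
  define r where "r = (- b) mod m"
  have repr: "b = (int h - i') * m - r' \<and> 0 \<le> r' \<and> r' < m \<longleftrightarrow> (i', r') = (i, r)" for i' r'
    using diff_mult_sub_eq_iff_div_mod[OF assms(1)] by (auto simp: i_def r_def)
  then have "b = (int h - i) * m - r" "0 \<le> r" "r < m"
    by auto
  then have "1 * m < (int h - i) * m" "(int h - i) * m < (int h + 1) * m"
    using assms by (simp_all add: algebra_simps)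
  then have "0 \<le> i" "i \<le> int h - 2"
    using assms(1) mult_less_cancel_right_pos by fastforce+
  show ?thesis
  proof (rule ex1I[of _ "(i, r)"])
    fix p :: "int \<times> int"
    assume "0 \<le> fst p \<and> fst p \<le> int h - 2 \<and> 0 \<le> snd p \<and> snd p < m
      \<and> b = (int h - fst p) * m - snd p"
    then show "p = (i, r)"
      using repr[of "fst p" "snd p"] by simp
  qed (use repr \<open>0 \<le> i\<close> \<open>i \<le> int h - 2\<close> in auto)
qed

theorem mainTheorem7:
  fixes h k :: nat and b :: int
  assumes "h \<ge> 2" and "k \<ge> 3"
  defines "A \<equiv> {0..int k - 2} \<union> {b}"
  shows "(b > int h * (int k - 2) \<longrightarrow>
           (real (card (sumset h A)) = (real h + 1) * (1 + real h * (real k - 2) / 2)))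
       \<and> (int k - 1 \<le> b \<and> b \<le> int h * (int k - 2) \<longrightarrow>
           (\<exists>!p :: int \<times> int. 0 \<le> fst p \<and> fst p \<le> int h - 2 \<and> 0 \<le> snd p \<and> snd p \<le> int k - 3
                \<and> b = (int h - fst p) * (int k - 2) - snd p)
         \<and> (\<forall>i0 r :: int. 0 \<le> i0 \<and> i0 \<le> int h - 2 \<and> 0 \<le> r \<and> r \<le> int k - 3
                \<and> b = (int h - i0) * (int k - 2) - r \<longrightarrow>
              real (card (sumset h A)) =
                real_of_int ((i0 + 1) * b + (int h - i0) * (int h * (int k - 2) + 1))
                - real_of_int ((int h + i0 + 1) * (int h - i0) * (int k - 2)) / 2))"
proof -
  define m where "m = int k - 2"
  have "1 \<le> m" "real k - 2 = m" "int k - 1 = m + 1"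
    using assms(2) by (simp_all add: m_def)
  have le_k3: "x \<le> int k - 3 \<longleftrightarrow> x < m" for x
    unfolding m_def by arith
  have A: "A = insert b {0..m}"
    by (simp add: A_def m_def)
  show ?thesis
    unfolding A le_k3 m_def[symmetric] \<open>real k - 2 = m\<close> \<open>int k - 1 = m + 1\<close>
  proof (intro conjI impI allI)
    show "real (card (sumset h (insert b {0..m}))) = (real h + 1) * (1 + real h * m / 2)"
      if "int h * m < b"
      using card_sumset_insert_above \<open>1 \<le> m\<close> that by simp
    show "\<exists>!p. 0 \<le> fst p \<and> fst p \<le> int h - 2 \<and> 0 \<le> snd p \<and> snd p < m
      \<and> b = (int h - fst p) * m - snd p" if "m + 1 \<le> b \<and> b \<le> int h * m"
      using ex1_diff_mult_sub_repr \<open>1 \<le> m\<close> that by simp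
    show "real (card (sumset h (insert b {0..m}))) =
      real_of_int ((i + 1) * b + (int h - i) * (int h * m + 1))
      - real_of_int ((int h + i + 1) * (int h - i) * m) / 2"
      if "0 \<le> i \<and> i \<le> int h - 2 \<and> 0 \<le> r \<and> r < m \<and> b = (int h - i) * m - r" for i r
      using card_sumset_insert_between that by blast
  qed
qed

end
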